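(* Let $v_1,v_2\in\mathbb{R}^2$ be two linearly independent unit vectors, and let $\xi\in\mathbb{R}^2$ satisfy $d_1:=\langle v_1,\xi\rangle\ge0$ and $d_2:=\langle v_2,\xi\rangle\ge 0$. Define $$\gamma_{12}:=\Pr\{\langle X,v_1\rangle\le 0,\ \langle X,v_2\rangle\le0\}\quad\text{for } X\sim\mathcal{N}(\xi,I).$$ Then $\alpha_{12}:=\langle v_1,v_2\rangle$ is identifiable from $d_1,d_2,\gamma_{12}$. That is, if $(v_1',v_2',\xi')$ is another triple satisfying the same hypotheses with the same values of $d_1,d_2,\gamma_{12}$, then $\langle v_1',v_2'\rangle=\langle v_1,v_2\rangle$. *)

theory Defs
  imports "HOL-Probability.Probability"
begin

definition gauss2 :: "real^2 \<Rightarrow> (real^2) measure" where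
  "gauss2 xi = density lborel (\<lambda>x. ennreal (exp (- (norm (x - xi))\<^sup>2 / 2) / (2 * pi)))"

definition gamma12 :: "real^2 \<Rightarrow> real^2 \<Rightarrow> real^2 \<Rightarrow> real" where
  "gamma12 v1 v2 xi = measure (gauss2 xi) {x. x \<bullet> v1 \<le> 0 \<and> x \<bullet> v2 \<le> 0}"

definition admissible :: "real^2 \<Rightarrow> real^2 \<Rightarrow> real^2 \<Rightarrow> bool" where
  "admissible v1 v2 xi \<longleftrightarrow> norm v1 = 1 \<and> norm v2 = 1 \<and> v1 \<noteq> v2 \<and>
     independent {v1, v2} \<and> v1 \<bullet> xi \<ge> 0 \<and> v2 \<bullet> xi \<ge> 0"

end

theory Submission
  imports Defs
begin

text \<open>Translating by xi turns gamma12 into the standard Gaussian measure of the wedge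
  {z. z \<bullet> v1 \<le> -d1 \<and> z \<bullet> v2 \<le> -d2}, and an orthogonal map taking v1' to v1 reduces the claim
  to strict monotonicity of this measure in v1 \<bullet> v2 for fixed v1. If p, q are unit vectors with
  c \<bullet> q < c \<bullet> p, the reflection exchanging p and q maps the part of the q-wedge outside the
  p-wedge into the part of the p-wedge outside the q-wedge, and misses a nonempty open subset of
  it, which has positive Gaussian measure.\<close>

definition reflect_along :: "'a::real_inner \<Rightarrow> 'a \<Rightarrow> 'a" where
  "reflect_along w z = z - (2 * (z \<bullet> w) / (w \<bullet> w)) *\<^sub>R w"

lemma reflect_along_zero [simp]: "reflect_along 0 z = z"
  by (simp add: reflect_along_def)

lemma reflect_along_self [simp]: "reflect_along w w = - w"
  by (cases "w = 0") (simp_all add: reflect_along_def scaleR_2)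

lemma inner_reflect_along: "reflect_along w a \<bullet> b = a \<bullet> reflect_along w b"
  by (simp add: reflect_along_def inner_diff_left inner_diff_right algebra_simps inner_commute)

lemma inner_reflect_along_self: "reflect_along w z \<bullet> w = - (z \<bullet> w)"
  using inner_reflect_along[of w z w] by simp

lemma reflect_along_reflect_along [simp]: "reflect_along w (reflect_along w z) = z"
  by (simp add: reflect_along_def[of w "reflect_along w z"] inner_reflect_along_self)
     (simp add: reflect_along_def)

lemma orthogonal_transformation_reflect_along: "orthogonal_transformation (reflect_along w)"
proof -
  have "linear (reflect_along w)"
    by (rule linearI) (simp_all add: reflect_along_def inner_add_left algebra_simps add_divide_distrib)
  then show ?thesis
    unfolding orthogonal_transformation_def by (metis inner_reflect_along reflect_along_reflect_along)
qed

lemma reflect_along_swap: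
  assumes "norm p = norm q"
  shows "reflect_along (q - p) p = q" and "reflect_along (q - p) q = p"
proof -
  define w where "w = q - p"
  have "p \<bullet> p = q \<bullet> q"
    using assms by (metis power2_norm_eq_inner)
  then have ww: "2 * (p \<bullet> w) = - (w \<bullet> w)" "2 * (q \<bullet> w) = w \<bullet> w"
    by (simp_all add: w_def inner_diff_left inner_diff_right inner_commute)
  have "reflect_along w p = q \<and> reflect_along w q = p"
  proof (cases "w = 0")
    case False
    then have "w \<bullet> w \<noteq> 0" by simp
    then have coeff: "2 * (p \<bullet> w) / (w \<bullet> w) = -1" "2 * (q \<bullet> w) / (w \<bullet> w) = 1"
      by (subst ww, simp)+
    show ?thesis
      unfolding reflect_along_def coeff by (simp add: w_def)
  qed (simp add: w_def)
  then show "reflect_along (q - p) p = q" "reflect_along (q - p) q = p"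
    by (simp_all add: w_def)
qed

lemma inner_diff_gt_zero_if_norm_eq:
  assumes "norm p = norm q" and "p \<noteq> q"
  shows "0 < (q - p) \<bullet> q" and "(q - p) \<bullet> p < 0"
proof -
  have "p \<bullet> p = q \<bullet> q"
    using assms(1) by (metis power2_norm_eq_inner)
  moreover have "0 < (q - p) \<bullet> (q - p)"
    using assms(2) by simp
  ultimately show "0 < (q - p) \<bullet> q" and "(q - p) \<bullet> p < 0"
    by (auto simp: inner_diff_left inner_diff_right inner_commute)
qed

lemma inner_less_inner_reflect_along:
  assumes "c \<bullet> w < 0" and "0 < z \<bullet> w"
  shows "z \<bullet> c < z \<bullet> reflect_along w c"
proof -
  have "0 < w \<bullet> w"
    using assms(1) by (metis inner_gt_zero_iff inner_zero_right less_irrefl)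
  then have "2 * (c \<bullet> w) / (w \<bullet> w) * (z \<bullet> w) < 0"
    using assms by (simp add: divide_neg_pos mult_neg_pos)
  then show ?thesis
    by (simp add: reflect_along_def inner_diff_right)
qed

lemma borel_measurable_orthogonal_transformation:
  fixes f :: "'a::euclidean_space \<Rightarrow> 'a"
  assumes "orthogonal_transformation f"
  shows "f \<in> borel_measurable borel"
  using assms by (intro borel_measurable_continuous_onI linear_continuous_on)
    (simp add: linear_linear orthogonal_transformation_linear)

lemma lborel_distr_orthogonal_transformation:
  fixes f :: "real^'n::{finite,wellorder} \<Rightarrow> real^'n::_"
  assumes f: "orthogonal_transformation f"
  shows "distr lborel borel f = lborel"
proof (rule lborel_eqI[symmetric])
  show "sets (distr lborel borel f) = sets borel" by simp
  fix l u :: "real^'n::{finite,wellorder}"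
  assume le: "\<And>b. b \<in> Basis \<Longrightarrow> l \<bullet> b \<le> u \<bullet> b"
  let ?g = "inv f"
  have g: "orthogonal_transformation ?g"
    using f by (rule orthogonal_transformation_inv)
  have meas: "f \<in> borel_measurable borel"
    using f by (rule borel_measurable_orthogonal_transformation)
  have vimage: "f -` box l u = ?g ` box l u"
    using f by (simp add: bij_vimage_eq_inv_image orthogonal_transformation_bij)
  have bounded: "bounded (?g ` box l u)"
    using g by (auto intro: bounded_linear_image simp: orthogonal_transformation_linear linear_linear)
  have "emeasure (distr lborel borel f) (box l u) = emeasure lborel (?g ` box l u)"
    using meas by (simp add: emeasure_distr vimage[symmetric])
  also have "\<dots> = ennreal (measure lebesgue (?g ` box l u))"
    using emeasure_bounded_finite[OF bounded] measurable_sets_borel[OF meas, of "box l u"] vimage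
    by (simp add: emeasure_eq_ennreal_measure measure_completion)
  also have "measure lebesgue (?g ` box l u) = measure lebesgue (box l u)"
    using g by (rule measure_orthogonal_image) simp
  also have "ennreal \<dots> = emeasure lborel (box l u)"
    using emeasure_bounded_finite[of "box l u"] by (simp add: emeasure_eq_ennreal_measure)
  finally show "emeasure (distr lborel borel f) (box l u) = (\<Prod>b\<in>Basis. (u - l) \<bullet> b)"
    using le by (simp add: emeasure_lborel_box_eq)
qed

lemma gauss2_density_eq_prod_normal_density:
  fixes x xi :: "real^2"
  shows "exp (- (norm (x - xi))\<^sup>2 / 2) / (2 * pi) = (\<Prod>b\<in>Basis. normal_density (xi \<bullet> b) 1 (x \<bullet> b))"
proof -
  have "(norm (x - xi))\<^sup>2 = (\<Sum>b\<in>Basis. ((x - xi) \<bullet> b) * ((x - xi) \<bullet> b))"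
    unfolding power2_norm_eq_inner by (rule euclidean_inner)
  then have norm_sq: "(norm (x - xi))\<^sup>2 = (\<Sum>b\<in>Basis. (x \<bullet> b - xi \<bullet> b)\<^sup>2)"
    by (simp add: inner_diff_left power2_eq_square)
  have "(\<Prod>b\<in>(Basis::(real^2) set). normal_density (xi \<bullet> b) 1 (x \<bullet> b))
      = (\<Prod>b\<in>(Basis::(real^2) set). 1 / sqrt (2 * pi) * exp (- (x \<bullet> b - xi \<bullet> b)\<^sup>2 / 2))"
    by (simp add: normal_density_def power2_commute)
  also have "\<dots> = (1 / sqrt (2 * pi)) ^ 2 * exp (\<Sum>b\<in>Basis. - (x \<bullet> b - xi \<bullet> b)\<^sup>2 / 2)"
    by (simp only: prod.distrib prod_constant) (simp add: exp_sum)
  also have "\<dots> = exp (- (norm (x - xi))\<^sup>2 / 2) / (2 * pi)"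
    by (simp add: norm_sq sum_divide_distrib[symmetric] sum_negf power_divide)
  finally show ?thesis by simp
qed

lemma prob_space_gauss2: "prob_space (gauss2 xi)"
proof
  have "emeasure (gauss2 xi) (space (gauss2 xi)) =
      (\<integral>\<^sup>+x. (\<Prod>b\<in>Basis. ennreal (normal_density (xi \<bullet> b) 1 (x \<bullet> b))) \<partial>lborel)"
    unfolding gauss2_def gauss2_density_eq_prod_normal_density
    by (simp add: emeasure_density prod_ennreal)
  also have "\<dots> = (\<Prod>b\<in>(Basis::(real^2) set). \<integral>\<^sup>+t. ennreal (normal_density (xi \<bullet> b) 1 t) \<partial>lborel)"
    by (rule nn_integral_lborel_prod) auto
  also have "\<dots> = 1"
  proof (rule prod.neutral, intro ballI)
    fix b :: "real^2"
    have "prob_space (density lborel (normal_density (xi \<bullet> b) 1))"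
      by (rule prob_space_normal_density) simp
    then show "(\<integral>\<^sup>+t. ennreal (normal_density (xi \<bullet> b) 1 t) \<partial>lborel) = 1"
      using prob_space.emeasure_space_1 by (fastforce simp: emeasure_density)
  qed
  finally show "emeasure (gauss2 xi) (space (gauss2 xi)) = 1" .
qed

lemma sets_gauss2 [simp, measurable_cong]: "sets (gauss2 xi) = sets borel"
  by (simp add: gauss2_def)

lemma measure_gauss2_vimage:
  fixes h :: "real^2 \<Rightarrow> real^2"
  assumes h: "h \<in> borel_measurable borel" "distr lborel borel h = lborel"
    and dist: "\<And>z. norm (h z - y) = norm (z - xi)" and S: "S \<in> sets borel"
  shows "measure (gauss2 xi) (h -` S) = measure (gauss2 y) S"
proof -
  let ?f = "\<lambda>m x. ennreal (exp (- (norm (x - m))\<^sup>2 / 2) / (2 * pi))"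
  have "emeasure (gauss2 y) S = (\<integral>\<^sup>+x. ?f y x * indicator S x \<partial>distr lborel borel h)"
    unfolding gauss2_def h(2) using S by (simp add: emeasure_density)
  also have "\<dots> = (\<integral>\<^sup>+z. ?f xi z * indicator (h -` S) z \<partial>lborel)"
    using h(1) S by (simp add: nn_integral_distr dist indicator_def)
  also have "\<dots> = emeasure (gauss2 xi) (h -` S)"
    unfolding gauss2_def using measurable_sets_borel[OF h(1) S] by (simp add: emeasure_density)
  finally show ?thesis by (simp add: measure_def)
qed

lemma measure_gauss2_orthogonal_vimage:
  assumes "orthogonal_transformation f" and "S \<in> sets borel"
  shows "measure (gauss2 0) (f -` S) = measure (gauss2 0) S"
  using assms
  by (intro measure_gauss2_vimage lborel_distr_orthogonal_transformation
      borel_measurable_orthogonal_transformation) (auto simp: orthogonal_transformation_norm)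

lemma measure_gauss2_open_pos:
  assumes "open U" and "z \<in> U"
  shows "0 < measure (gauss2 xi) U"
proof -
  interpret prob_space "gauss2 xi" by (rule prob_space_gauss2)
  have "U \<notin> null_sets lborel"
  proof
    assume "U \<in> null_sets lborel"
    obtain r where "0 < r" "ball z r \<subseteq> U"
      using assms openE by blast
    then have "ball z r \<in> null_sets lborel"
      by (intro null_sets_subset[OF \<open>U \<in> null_sets lborel\<close>]) auto
    then have "measure lborel (ball z r) = 0"
      by (simp add: measure_def null_setsD1)
    with content_ball_pos[OF \<open>0 < r\<close>] show False by simp
  qed
  then have "U \<notin> null_sets (gauss2 xi)"
    unfolding gauss2_def using assms(1)
    by (subst null_sets_density_iff) (auto simp: borel_open AE_iff_null_sets)
  then show ?thesis
    using assms(1) by (simp add: emeasure_eq_measure null_sets_def borel_open less_le)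
qed

lemma measure_gauss2_strict_mono:
  assumes "S \<in> sets borel" "T \<in> sets borel" "S \<subseteq> T"
    and "open U" "z \<in> U" "U \<subseteq> T - S"
  shows "measure (gauss2 xi) S < measure (gauss2 xi) T"
proof -
  interpret prob_space "gauss2 xi" by (rule prob_space_gauss2)
  have "measure (gauss2 xi) S < measure (gauss2 xi) S + measure (gauss2 xi) U"
    using measure_gauss2_open_pos[OF assms(4,5)] by simp
  also have "\<dots> = measure (gauss2 xi) (S \<union> U)"
    using assms by (intro finite_measure_Union[symmetric]) (auto simp: borel_open)
  also have "\<dots> \<le> measure (gauss2 xi) T"
    using assms by (intro finite_measure_mono) auto
  finally show ?thesis .
qed

lemma eventually_less_mult_at_top:
  fixes a r :: real
  assumes "0 < r"
  shows "\<forall>\<^sub>F x in at_top. a < x * r"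
  using eventually_gt_at_top[of "a / r"] by eventually_elim (simp add: assms pos_divide_less_eq)

definition wedge_prob :: "real^2 \<Rightarrow> real \<Rightarrow> real^2 \<Rightarrow> real \<Rightarrow> real" where
  "wedge_prob a s b t = measure (gauss2 0) {z. z \<bullet> a \<le> s \<and> z \<bullet> b \<le> t}"

lemma gamma12_eq_wedge_prob:
  "gamma12 v1 v2 xi = wedge_prob v1 (- (v1 \<bullet> xi)) v2 (- (v2 \<bullet> xi))"
proof -
  have "(+) xi -` {x. x \<bullet> v1 \<le> 0 \<and> x \<bullet> v2 \<le> 0} =
      {z. z \<bullet> v1 \<le> - (v1 \<bullet> xi) \<and> z \<bullet> v2 \<le> - (v2 \<bullet> xi)}"
    by (auto simp: inner_add_left inner_commute[of xi])
  moreover have "measure (gauss2 0) ((+) xi -` {x. x \<bullet> v1 \<le> 0 \<and> x \<bullet> v2 \<le> 0}) = gamma12 v1 v2 xi"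
    unfolding gamma12_def by (rule measure_gauss2_vimage) (simp_all add: lborel_distr_plus)
  ultimately show ?thesis
    by (simp add: wedge_prob_def)
qed

lemma wedge_prob_orthogonal_transformation:
  assumes "orthogonal_transformation f"
  shows "wedge_prob (f a) s (f b) t = wedge_prob a s b t"
proof -
  have "f -` {z. z \<bullet> f a \<le> s \<and> z \<bullet> f b \<le> t} = {z. z \<bullet> a \<le> s \<and> z \<bullet> b \<le> t}"
    using assms by (simp add: orthogonal_transformation_def)
  moreover have "measure (gauss2 0) (f -` {z. z \<bullet> f a \<le> s \<and> z \<bullet> f b \<le> t}) =
      measure (gauss2 0) {z. z \<bullet> f a \<le> s \<and> z \<bullet> f b \<le> t}"
    using assms by (rule measure_gauss2_orthogonal_vimage) measurable
  ultimately show ?thesis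
    by (simp add: wedge_prob_def)
qed

lemma wedge_prob_split:
  "wedge_prob c s q t = measure (gauss2 0) {z. z \<bullet> c \<le> s \<and> z \<bullet> p \<le> t \<and> z \<bullet> q \<le> t}
     + measure (gauss2 0) {z. z \<bullet> c \<le> s \<and> z \<bullet> q \<le> t \<and> t < z \<bullet> p}"
proof -
  interpret prob_space "gauss2 0"
    by (rule prob_space_gauss2)
  have "{z. z \<bullet> c \<le> s \<and> z \<bullet> q \<le> t} = {z. z \<bullet> c \<le> s \<and> z \<bullet> p \<le> t \<and> z \<bullet> q \<le> t}
      \<union> {z. z \<bullet> c \<le> s \<and> z \<bullet> q \<le> t \<and> t < z \<bullet> p}"
    by auto
  then show ?thesis
    unfolding wedge_prob_def by (simp only:) (rule finite_measure_Union; auto)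
qed

lemma measure_gauss2_wedge_part_less:
  assumes "norm p = norm q" and "c \<bullet> q < c \<bullet> p"
  shows "measure (gauss2 0) {z. z \<bullet> c \<le> s \<and> z \<bullet> q \<le> t \<and> t < z \<bullet> p}
    < measure (gauss2 0) {z. z \<bullet> c \<le> s \<and> z \<bullet> p \<le> t \<and> t < z \<bullet> q}"
    (is "measure _ ?Q < measure _ ?P")
proof -
  define w where "w = q - p"
  define c' where "c' = reflect_along w c"
  define R where "R = {z. z \<bullet> c' \<le> s \<and> z \<bullet> p \<le> t \<and> t < z \<bullet> q}"
  define U where "U = {z. z \<bullet> c < s \<and> z \<bullet> p < t \<and> t < z \<bullet> q \<and> s < z \<bullet> c'}"
  have cw: "c \<bullet> w < 0"
    using assms(2) by (simp add: w_def inner_diff_right)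
  have "p \<noteq> q"
    using assms(2) by auto
  then have signs: "0 < - (w \<bullet> c)" "0 < - (w \<bullet> p)" "0 < w \<bullet> q" "0 < w \<bullet> c'"
    using cw inner_diff_gt_zero_if_norm_eq[OF assms(1), folded w_def]
      inner_reflect_along_self[of w c, folded c'_def]
    by (simp_all add: inner_commute)
  have "\<forall>\<^sub>F x in at_top. x *\<^sub>R w \<in> U"
    using eventually_less_mult_at_top[OF signs(1), of "- s"]
      eventually_less_mult_at_top[OF signs(2), of "- t"]
      eventually_less_mult_at_top[OF signs(3), of t] eventually_less_mult_at_top[OF signs(4), of s]
    by eventually_elim (auto simp: U_def inner_commute)
  then obtain x where "x *\<^sub>R w \<in> U"
    using eventually_happens'[OF trivial_limit_at_top_linorder] by blast
  have "?Q = reflect_along w -` R"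
    using reflect_along_swap[OF assms(1)]
    by (auto simp: R_def c'_def w_def inner_reflect_along)
  moreover have "R \<in> sets borel"
    unfolding R_def by measurable
  ultimately have "measure (gauss2 0) ?Q = measure (gauss2 0) R"
    by (simp add: measure_gauss2_orthogonal_vimage orthogonal_transformation_reflect_along)
  also have "\<dots> < measure (gauss2 0) ?P"
  proof (rule measure_gauss2_strict_mono)
    show "R \<subseteq> ?P"
    proof
      fix z assume z: "z \<in> R"
      then have "0 < z \<bullet> w"
        by (auto simp: R_def w_def inner_diff_right)
      with z show "z \<in> ?P"
        using inner_less_inner_reflect_along[OF cw] by (fastforce simp: R_def c'_def)
    qed
    show "open U"
      unfolding U_def by (intro open_Collect_conj open_Collect_less continuous_intros)
    show "x *\<^sub>R w \<in> U" by fact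
  qed (auto simp: U_def R_def)
  finally show ?thesis .
qed

lemma wedge_prob_strict_mono:
  assumes "norm p = norm q" and "c \<bullet> q < c \<bullet> p"
  shows "wedge_prob c s q t < wedge_prob c s p t"
  using wedge_prob_split[of c s q t p] wedge_prob_split[of c s p t q]
    measure_gauss2_wedge_part_less[OF assms, of s t]
  by (simp add: conj_commute conj_left_commute)

lemma wedge_prob_eq_imp_inner_eq:
  assumes "norm p = norm q" and "wedge_prob c s p t = wedge_prob c s q t"
  shows "c \<bullet> p = c \<bullet> q"
  using wedge_prob_strict_mono[OF assms(1)] wedge_prob_strict_mono[OF assms(1)[symmetric]] assms(2)
  by (metis linorder_neqE_linordered_idom order_less_irrefl)

theorem lemma2:
  fixes v1 v2 xi v1' v2' xi' :: "real^2"
  assumes "admissible v1 v2 xi" and "admissible v1' v2' xi'"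
    and "v1' \<bullet> xi' = v1 \<bullet> xi" and "v2' \<bullet> xi' = v2 \<bullet> xi"
    and "gamma12 v1' v2' xi' = gamma12 v1 v2 xi"
  shows "v1' \<bullet> v2' = v1 \<bullet> v2"
proof -
  have unit: "norm v1 = 1" "norm v2 = 1" "norm v1' = 1" "norm v2' = 1"
    using assms(1,2) by (simp_all add: admissible_def)
  obtain f where f: "orthogonal_transformation f" "f v1' = v1"
    using orthogonal_transformation_exists_1[OF unit(3,1)] by blast
  have "wedge_prob v1 (- (v1 \<bullet> xi)) (f v2') (- (v2 \<bullet> xi)) =
      wedge_prob v1' (- (v1 \<bullet> xi)) v2' (- (v2 \<bullet> xi))"
    using wedge_prob_orthogonal_transformation[OF f(1)] f(2) by metis
  also have "\<dots> = wedge_prob v1 (- (v1 \<bullet> xi)) v2 (- (v2 \<bullet> xi))"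
    using assms(3-5) by (simp add: gamma12_eq_wedge_prob)
  finally have "v1 \<bullet> f v2' = v1 \<bullet> v2"
    by (rule wedge_prob_eq_imp_inner_eq[rotated]) (simp add: f(1) orthogonal_transformation_norm unit)
  then show ?thesis
    using f by (metis orthogonal_transformation_def)
qed

end
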